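(* Let $\lambda\in\overline{\mathrm{Pr}}_k$ and $\mu\in W\cdot\lambda$. Then $\mu\in\overline{\mathrm{Pr}}_k$ if and only if $\mu$ is dominant.
   Context: Let $\mathfrak g=\mathfrak{sl}_{n+1}(\mathbb C)$, $n\ge1$, $\mathfrak h$ the traceless diagonal matrices, $\Delta_+=\{\varepsilon_i-\varepsilon_j:i<j\}$, $\Delta_-=-\Delta_+$, $\alpha_i=\varepsilon_i-\varepsilon_{i+1}$; $(\cdot,\cdot)$ the invariant form on $\mathfrak h^*$ with $(\alpha,\alpha)=2$ for roots, $\langle\mu,\alpha^\vee\rangle=(\mu,\alpha)$; $\omega_i$ fundamental weights, $P^\vee=\bigoplus\mathbb Z\omega_i$, $\rho=\sum\omega_i$; $W$ the Weyl group, $w\cdot\mu=w(\mu+\rho)-\rho$. A weight $\mu\in\mathfrak h^*$ is dominant if $\langle\mu+\rho,\alpha^\vee\rangle\notin\{-1,-2,-3,\dots\}$ for all $\alpha\in\Delta_+$. Fix $k\in\mathbb Q$ with $k+n+1=p/q$, $p,q\in\mathbb N$ coprime, $p\ge n+1$. $\overline{\mathrm{Pr}}_{k,\mathbb Z}=\{\sum\lambda_i\omega_i:\lambda_i\in\mathbb N_0,\sum\lambda_i\le p-n-1\}$. For $w\in W,\eta\in P^\vee$, $C(w,\eta)$ means: for all $\alpha\in\Delta_+$, $0\le(\eta,\alpha)\le q-1$ if $w(\alpha)\in\Delta_+$ and $1\le(\eta,\alpha)\le q$ if $w(\alpha)\in\Delta_-$. The admissible weights of level $k$: $\overline{\mathrm{Pr}}_k=\{w\cdot(\mu-\tfrac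 pq\eta):\mu\in\overline{\mathrm{Pr}}_{k,\mathbb Z},w\in W,\eta\in P^\vee,C(w,\eta)\}$. *)

theory Defs
  imports Complex_Main "HOL-Combinatorics.Permutations"
begin

text \<open>Model of h* for sl_(n+1): a weight is given by its coordinates w.r.t.
 eps_0,...,eps_n (0-indexed), normalised to be traceless (sum zero), and
 extended by 0 outside {0..n}. Then (mu, eps_i - eps_j) = mu i - mu j.
 The Weyl group W = S_(n+1) is given by permutations sigma of {0..n},
 acting by (w mu) i = mu (inv sigma i), i.e. w(eps_j) = eps_(sigma j).\<close>

definition is_weight :: "nat \<Rightarrow> (nat \<Rightarrow> complex) \<Rightarrow> bool" where
  "is_weight n x \<longleftrightarrow> (\<forall>i>n. x i = 0) \<and> (\<Sum>i\<le>n. x i) = 0"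

definition rho :: "nat \<Rightarrow> nat \<Rightarrow> complex" where
  "rho n i = (if i \<le> n then of_nat n / 2 - of_nat i else 0)"

definition weyl_act :: "(nat \<Rightarrow> nat) \<Rightarrow> (nat \<Rightarrow> complex) \<Rightarrow> nat \<Rightarrow> complex" where
  "weyl_act \<sigma> x = (\<lambda>i. x (inv \<sigma> i))"

definition dot_act :: "nat \<Rightarrow> (nat \<Rightarrow> nat) \<Rightarrow> (nat \<Rightarrow> complex) \<Rightarrow> nat \<Rightarrow> complex" where
  "dot_act n \<sigma> x = (\<lambda>i. weyl_act \<sigma> (\<lambda>j. x j + rho n j) i - rho n i)"

definition weyl_group :: "nat \<Rightarrow> (nat \<Rightarrow> nat) set" where
  "weyl_group n = {\<sigma>. \<sigma> permutes {0..n}}"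

definition dot_orbit :: "nat \<Rightarrow> (nat \<Rightarrow> complex) \<Rightarrow> (nat \<Rightarrow> complex) set" where
  "dot_orbit n x = {dot_act n \<sigma> x | \<sigma>. \<sigma> \<in> weyl_group n}"

text \<open>Positive roots are eps_i - eps_j with i < j \<le> n; <mu+rho, alpha^v> = (mu+rho)_i - (mu+rho)_j.\<close>
definition dominant :: "nat \<Rightarrow> (nat \<Rightarrow> complex) \<Rightarrow> bool" where
  "dominant n x \<longleftrightarrow> (\<forall>i j. i < j \<and> j \<le> n \<longrightarrow>
     (\<forall>m::nat. m \<ge> 1 \<longrightarrow> (x i + rho n i) - (x j + rho n j) \<noteq> - of_nat m))"

text \<open>Coweight lattice P^v = sum Z omega_i (traceless vectors with integral differences).\<close>
definition coweight_lattice :: "nat \<Rightarrow> (nat \<Rightarrow> complex) set" where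
  "coweight_lattice n = {\<eta>. is_weight n \<eta> \<and> (\<forall>i<n. \<eta> i - \<eta> (Suc i) \<in> \<int>)}"

text \<open>Pr_{k,Z}: sum lambda_i omega_i with lambda_i = mu i - mu (i+1) in N_0 and
  sum lambda_i = mu 0 - mu n \<le> p - n - 1.\<close>
definition PrZ :: "nat \<Rightarrow> nat \<Rightarrow> (nat \<Rightarrow> complex) set" where
  "PrZ n p = {\<mu>. is_weight n \<mu> \<and> (\<forall>i<n. \<mu> i - \<mu> (Suc i) \<in> \<nat>) \<and>
      (\<exists>m::nat. \<mu> 0 - \<mu> n = of_nat m \<and> int m \<le> int p - int n - 1)}"

definition cond_C :: "nat \<Rightarrow> nat \<Rightarrow> (nat \<Rightarrow> nat) \<Rightarrow> (nat \<Rightarrow> complex) \<Rightarrow> bool" where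
  "cond_C n q \<sigma> \<eta> \<longleftrightarrow> (\<forall>i j. i < j \<and> j \<le> n \<longrightarrow>
     (if \<sigma> i < \<sigma> j
      then (\<exists>m::int. \<eta> i - \<eta> j = of_int m \<and> 0 \<le> m \<and> m \<le> int q - 1)
      else (\<exists>m::int. \<eta> i - \<eta> j = of_int m \<and> 1 \<le> m \<and> m \<le> int q)))"

definition admissible :: "nat \<Rightarrow> nat \<Rightarrow> nat \<Rightarrow> (nat \<Rightarrow> complex) set" where
  "admissible n p q = {dot_act n \<sigma> (\<lambda>i. \<mu> i - (of_nat p / of_nat q) * \<eta> i) | \<mu> \<sigma> \<eta>.
     \<mu> \<in> PrZ n p \<and> \<sigma> \<in> weyl_group n \<and> \<eta> \<in> coweight_lattice n \<and> cond_C n q \<sigma> \<eta>}"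

end

theory Submission
  imports Defs
begin

text \<open>Write an admissible weight as \<open>\<sigma>\<cdot>x\<close> with \<open>x = \<mu> - (p/q)\<eta>\<close>. For \<open>i < j\<close>, the
  entries \<open>i, j\<close> of \<open>x + \<rho>\<close> differ by \<open>a - (p/q)m\<close>, where \<open>0 < a < p\<close> because \<open>\<mu>\<close> is
  integral dominant of level at most \<open>p - n - 1\<close>, and \<open>0 \<le> m \<le> q\<close> whatever the permutation in
  condition \<open>C\<close> is. As \<open>p, q\<close> are coprime this is an integer only for \<open>m \<in> {0, q}\<close>, and then it
  equals \<open>a > 0\<close> resp. \<open>a - p < 0\<close>. Since \<open>\<sigma>\<cdot>x + \<rho>\<close> is \<open>x + \<rho>\<close> with entries permuted by \<open>\<sigma>\<close>,
  dominance of \<open>\<sigma>\<cdot>x\<close> says precisely that \<open>m \<noteq> q\<close> when \<open>\<sigma>\<close> keeps \<open>i, j\<close> in order and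
  \<open>m \<noteq> 0\<close> when it swaps them, i.e. that \<open>C(\<sigma>, \<eta>)\<close> holds. Every element of \<open>W\<cdot>\<lambda>\<close> has the form
  \<open>\<sigma>\<cdot>x\<close> with the same \<open>x\<close> as \<open>\<lambda>\<close>, so it is admissible iff it is dominant.\<close>

definition is_neg_int :: "complex \<Rightarrow> bool" where
  "is_neg_int z \<longleftrightarrow> (\<exists>k::nat. 1 \<le> k \<and> z = - of_nat k)"

definition gaps_bounded :: "nat \<Rightarrow> nat \<Rightarrow> (nat \<Rightarrow> complex) \<Rightarrow> bool" where
  "gaps_bounded n q \<eta> \<longleftrightarrow> (\<forall>i j. i < j \<and> j \<le> n \<longrightarrow>
     (\<exists>m::int. \<eta> i - \<eta> j = of_int m \<and> 0 \<le> m \<and> m \<le> int q))"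

lemma dominant_iff_is_neg_int:
  "dominant n x \<longleftrightarrow>
    (\<forall>i j. i < j \<and> j \<le> n \<longrightarrow> \<not> is_neg_int ((x i + rho n i) - (x j + rho n j)))"
  unfolding dominant_def is_neg_int_def by blast

lemma cond_C_imp_gaps_bounded:
  assumes "cond_C n q \<sigma> \<eta>"
  shows "gaps_bounded n q \<eta>"
  unfolding gaps_bounded_def
proof (intro allI impI)
  fix i j assume "i < j \<and> j \<le> n"
  with assms have "if \<sigma> i < \<sigma> j
      then (\<exists>m::int. \<eta> i - \<eta> j = of_int m \<and> 0 \<le> m \<and> m \<le> int q - 1)
      else (\<exists>m::int. \<eta> i - \<eta> j = of_int m \<and> 1 \<le> m \<and> m \<le> int q)"
    unfolding cond_C_def by blast
  then show "\<exists>m::int. \<eta> i - \<eta> j = of_int m \<and> 0 \<le> m \<and> m \<le> int q"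
    by (smt (verit))
qed

lemma dot_act_add_rho: "dot_act n \<sigma> x i + rho n i = x (inv \<sigma> i) + rho n (inv \<sigma> i)"
  by (simp add: dot_act_def weyl_act_def)

lemma dot_act_compose:
  assumes "bij \<tau>" "bij \<sigma>"
  shows "dot_act n \<tau> (dot_act n \<sigma> x) = dot_act n (\<tau> \<circ> \<sigma>) x"
proof
  fix i
  have "inv (\<tau> \<circ> \<sigma>) = inv \<sigma> \<circ> inv \<tau>" using assms by (simp add: o_inv_distrib)
  then show "dot_act n \<tau> (dot_act n \<sigma> x) i = dot_act n (\<tau> \<circ> \<sigma>) x i"
    by (simp add: dot_act_def weyl_act_def)
qed

lemma permutes_all_pairs_iff:
  fixes n :: nat
  assumes "\<sigma> permutes {0..n}"
  shows "(\<forall>i j. i \<le> n \<and> j \<le> n \<longrightarrow> P (\<sigma> i) (\<sigma> j)) \<longleftrightarrow>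
    (\<forall>i j. i \<le> n \<and> j \<le> n \<longrightarrow> P i j)"
proof
  assume H: "\<forall>i j. i \<le> n \<and> j \<le> n \<longrightarrow> P (\<sigma> i) (\<sigma> j)"
  show "\<forall>i j. i \<le> n \<and> j \<le> n \<longrightarrow> P i j"
  proof (intro allI impI)
    fix i j assume "i \<le> n \<and> j \<le> n"
    then have "inv \<sigma> i \<le> n" "inv \<sigma> j \<le> n"
      using permutes_in_image[OF permutes_inv[OF assms]] by auto
    moreover have "\<sigma> (inv \<sigma> i) = i" "\<sigma> (inv \<sigma> j) = j"
      using permutes_inverses(1)[OF assms] by auto
    ultimately show "P i j" using H by metis
  qed
qed (use permutes_in_image[OF assms] in auto)

lemma dominant_dot_act_iff:
  assumes \<sigma>: "\<sigma> permutes {0..n}"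
  shows "dominant n (dot_act n \<sigma> x) \<longleftrightarrow>
    (\<forall>i j. i \<le> n \<and> j \<le> n \<and> \<sigma> i < \<sigma> j \<longrightarrow>
       \<not> is_neg_int ((x i + rho n i) - (x j + rho n j)))"
proof -
  define y where "y i = dot_act n \<sigma> x i + rho n i" for i
  have y: "y (\<sigma> i) = x i + rho n i" for i
    using \<sigma> by (simp add: y_def dot_act_add_rho permutes_inverses)
  have "dominant n (dot_act n \<sigma> x) \<longleftrightarrow>
    (\<forall>i j. i \<le> n \<and> j \<le> n \<longrightarrow> i < j \<longrightarrow> \<not> is_neg_int (y i - y j))"
    unfolding dominant_iff_is_neg_int y_def by (meson less_imp_le_nat order.strict_trans2)
  also have "\<dots> \<longleftrightarrow>
    (\<forall>i j. i \<le> n \<and> j \<le> n \<longrightarrow> \<sigma> i < \<sigma> j \<longrightarrow> \<not> is_neg_int (y (\<sigma> i) - y (\<sigma> j)))"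
    using permutes_all_pairs_iff[OF \<sigma>, of "\<lambda>i j. i < j \<longrightarrow> \<not> is_neg_int (y i - y j)"] by simp
  finally show ?thesis by (auto simp: y)
qed

lemma PrZ_diff_nat:
  assumes "\<mu> \<in> PrZ n p" "i \<le> j" "j \<le> n"
  shows "\<exists>d::nat. \<mu> i - \<mu> j = of_nat d"
  using assms(2,3)
proof (induction j rule: dec_induct)
  case base
  show ?case by (metis diff_self of_nat_0)
next
  case (step j)
  then obtain d where d: "\<mu> i - \<mu> j = of_nat d" by auto
  have "\<mu> j - \<mu> (Suc j) \<in> \<nat>" using assms(1) step by (auto simp: PrZ_def)
  then obtain e where e: "\<mu> j - \<mu> (Suc j) = of_nat e" by (auto elim: Nats_cases)
  have "\<mu> i - \<mu> (Suc j) = of_nat (d + e)" using d e by (simp add: algebra_simps)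
  then show ?case by blast
qed

lemma PrZ_shifted_diff_bounds:
  assumes "\<mu> \<in> PrZ n p" "i < j" "j \<le> n"
  obtains a :: nat where "(\<mu> i + rho n i) - (\<mu> j + rho n j) = of_nat a"
    and "1 \<le> a" and "int a \<le> int p - 1"
proof -
  obtain d1 where d1: "\<mu> 0 - \<mu> i = of_nat d1" using PrZ_diff_nat[OF assms(1), of 0 i] assms by auto
  obtain d where d: "\<mu> i - \<mu> j = of_nat d" using PrZ_diff_nat[OF assms(1), of i j] assms by auto
  obtain d2 where d2: "\<mu> j - \<mu> n = of_nat d2" using PrZ_diff_nat[OF assms(1), of j n] assms by auto
  obtain m :: nat where m: "\<mu> 0 - \<mu> n = of_nat m" "int m \<le> int p - int n - 1"
    using assms(1) by (auto simp: PrZ_def)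
  have "(of_nat m :: complex) = of_nat (d1 + d + d2)" using d1 d d2 m(1)
    by (simp add: algebra_simps)
  then have "m = d1 + d + d2" using of_nat_eq_iff by blast
  moreover have "rho n i - rho n j = of_nat (j - i)" using assms by (simp add: rho_def of_nat_diff)
  then have "(\<mu> i + rho n i) - (\<mu> j + rho n j) = of_nat (d + (j - i))"
    using d by (simp add: algebra_simps)
  moreover have "1 \<le> d + (j - i)" using assms by simp
  ultimately show ?thesis using that[of "d + (j - i)"] m(2) assms by simp
qed

lemma coprime_frac_mult_integral_cases:
  fixes a m t :: int and p q :: nat
  assumes "coprime p q" "q > 0" "0 \<le> m" "m \<le> int q"
    and eq: "of_int a - (of_nat p / of_nat q) * of_int m = (of_int t :: complex)"
  shows "(m = 0 \<and> t = a) \<or> (m = int q \<and> t = a - int p)"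
proof -
  from eq have "of_int a * of_nat q - of_nat p * of_int m = (of_int t * of_nat q :: complex)"
    using assms(2) by (simp add: field_simps)
  then have "(of_int (a * int q - int p * m) :: complex) = of_int (t * int q)" by simp
  then have e: "a * int q - int p * m = t * int q" using of_int_eq_iff by blast
  then have "int p * m = int q * (a - t)" by (simp add: algebra_simps)
  then have "int q dvd int p * m" by simp
  moreover have "coprime (int q) (int p)" using assms(1) by (simp add: coprime_commute)
  ultimately obtain c where c: "m = int q * c"
    using coprime_dvd_mult_right_iff by blast
  have "0 \<le> c" using c assms(2,3) by (simp add: zero_le_mult_iff)
  moreover have "c \<le> 1" using c assms(2,4)
    by (metis mult.right_neutral mult_le_cancel_left_pos of_nat_0_less_iff)
  ultimately have "c = 0 \<or> c = 1" by linarith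
  then show ?thesis
  proof
    assume "c = 1"
    then have "(a - int p) * int q = t * int q" using c e by (simp add: algebra_simps)
    then show ?thesis using c \<open>c = 1\<close> assms(2) by simp
  qed (use c e assms(2) in simp)
qed

lemma shifted_diff_is_neg_int_iff:
  assumes "coprime p q" "q > 0" "\<mu> \<in> PrZ n p" "gaps_bounded n q \<eta>" "i < j" "j \<le> n"
    and x: "x = (\<lambda>i. \<mu> i - (of_nat p / of_nat q) * \<eta> i)"
  obtains m :: int where "\<eta> i - \<eta> j = of_int m" "0 \<le> m" "m \<le> int q"
    and "is_neg_int ((x i + rho n i) - (x j + rho n j)) \<longleftrightarrow> m = int q"
    and "is_neg_int ((x j + rho n j) - (x i + rho n i)) \<longleftrightarrow> m = 0"
proof -
  obtain m :: int where m: "\<eta> i - \<eta> j = of_int m" "0 \<le> m" "m \<le> int q"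
    using assms(4-6) unfolding gaps_bounded_def by blast
  obtain a :: nat where a: "(\<mu> i + rho n i) - (\<mu> j + rho n j) = of_nat a"
    "1 \<le> a" "int a \<le> int p - 1"
    using PrZ_shifted_diff_bounds[OF assms(3,5,6)] by blast
  define g where "g = (x i + rho n i) - (x j + rho n j)"
  have g: "g = of_int (int a) - (of_nat p / of_nat q) * of_int m"
    unfolding g_def x using a(1) m(1) by (simp add: algebra_simps add_divide_distrib[symmetric])
  have "is_neg_int g \<longleftrightarrow> m = int q"
  proof
    assume "is_neg_int g"
    then obtain k :: nat where k: "1 \<le> k" "g = of_int (- int k)" by (auto simp: is_neg_int_def)
    then have "(m = 0 \<and> - int k = int a) \<or> (m = int q \<and> - int k = int a - int p)"
      using coprime_frac_mult_integral_cases[OF assms(1,2) m(2,3), of "int a" "- int k"] g by simp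
    then show "m = int q" using k(1) by linarith
  next
    assume "m = int q"
    then have "g = - of_nat (p - a)" using g a(3) assms(2) by (simp add: of_nat_diff)
    moreover have "1 \<le> p - a" using a(3) by simp
    ultimately show "is_neg_int g" unfolding is_neg_int_def by blast
  qed
  moreover have "is_neg_int (- g) \<longleftrightarrow> m = 0"
  proof
    assume "is_neg_int (- g)"
    then obtain k :: nat where "g = of_int (int k)" by (auto simp: is_neg_int_def)
    then have "(m = 0 \<and> int k = int a) \<or> (m = int q \<and> int k = int a - int p)"
      using coprime_frac_mult_integral_cases[OF assms(1,2) m(2,3), of "int a" "int k"] g by simp
    then show "m = 0" using a(3) by linarith
  qed (use g a(2) in \<open>auto simp: is_neg_int_def\<close>)
  ultimately show ?thesis using that m unfolding g_def by (simp add: algebra_simps)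
qed

lemma cond_C_iff_dominant:
  assumes "coprime p q" "q > 0" "\<mu> \<in> PrZ n p" "gaps_bounded n q \<eta>" "\<sigma> permutes {0..n}"
  shows "cond_C n q \<sigma> \<eta> \<longleftrightarrow>
    dominant n (dot_act n \<sigma> (\<lambda>i. \<mu> i - (of_nat p / of_nat q) * \<eta> i))"
    (is "_ \<longleftrightarrow> dominant n (dot_act n \<sigma> ?x)")
proof -
  define neg where "neg i j \<longleftrightarrow> is_neg_int ((?x i + rho n i) - (?x j + rho n j))" for i j
  have \<sigma>_inj: "\<sigma> i \<noteq> \<sigma> j" if "i \<noteq> j" for i j
    using permutes_inj[OF assms(5)] that by (meson injD)
  have pair: "(if \<sigma> i < \<sigma> j
      then (\<exists>m::int. \<eta> i - \<eta> j = of_int m \<and> 0 \<le> m \<and> m \<le> int q - 1)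
      else (\<exists>m::int. \<eta> i - \<eta> j = of_int m \<and> 1 \<le> m \<and> m \<le> int q))
    \<longleftrightarrow> (\<sigma> i < \<sigma> j \<longrightarrow> \<not> neg i j) \<and> (\<sigma> j < \<sigma> i \<longrightarrow> \<not> neg j i)"
    if ij: "i < j" "j \<le> n" for i j
  proof -
    obtain m :: int where "\<eta> i - \<eta> j = of_int m" "0 \<le> m" "m \<le> int q"
      and "neg i j \<longleftrightarrow> m = int q" "neg j i \<longleftrightarrow> m = 0"
      using shifted_diff_is_neg_int_iff[OF assms(1-4) ij refl] unfolding neg_def by blast
    then show ?thesis using \<sigma>_inj[of i j] ij by (auto simp: of_int_eq_iff)
  qed
  have "dominant n (dot_act n \<sigma> ?x) \<longleftrightarrow>
    (\<forall>i j. i \<le> n \<and> j \<le> n \<and> \<sigma> i < \<sigma> j \<longrightarrow> \<not> neg i j)"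
    unfolding dominant_dot_act_iff[OF assms(5)] neg_def ..
  also have "\<dots> \<longleftrightarrow>
    (\<forall>i j. i < j \<and> j \<le> n \<longrightarrow> (\<sigma> i < \<sigma> j \<longrightarrow> \<not> neg i j) \<and> (\<sigma> j < \<sigma> i \<longrightarrow> \<not> neg j i))"
  proof safe
    fix i j assume "\<forall>i j. i < j \<and> j \<le> n \<longrightarrow>
        (\<sigma> i < \<sigma> j \<longrightarrow> \<not> neg i j) \<and> (\<sigma> j < \<sigma> i \<longrightarrow> \<not> neg j i)"
      and "i \<le> n" "j \<le> n" "\<sigma> i < \<sigma> j" "neg i j"
    then show False by (cases i j rule: linorder_cases) auto
  qed auto
  finally show ?thesis unfolding cond_C_def using pair by (simp cong: conj_cong)
qed

theorem mainTheorem6: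
  fixes n p q :: nat and k :: rat and lam mu :: "nat \<Rightarrow> complex"
  assumes "n \<ge> 1"
    and "p > 0" and "q > 0" and "coprime p q"
    and "k + of_nat n + 1 = of_nat p / of_nat q"
    and "p \<ge> n + 1"
    and "lam \<in> admissible n p q"
    and "mu \<in> dot_orbit n lam"
  shows "mu \<in> admissible n p q \<longleftrightarrow> dominant n mu"
proof
  assume "mu \<in> admissible n p q"
  then obtain \<mu> \<sigma> \<eta> where "mu = dot_act n \<sigma> (\<lambda>i. \<mu> i - (of_nat p / of_nat q) * \<eta> i)"
    and "\<mu> \<in> PrZ n p" "\<sigma> permutes {0..n}" "cond_C n q \<sigma> \<eta>"
    by (auto simp: admissible_def weyl_group_def)
  then show "dominant n mu"
    using cond_C_iff_dominant[OF assms(4,3)] cond_C_imp_gaps_bounded by blast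
next
  assume dom: "dominant n mu"
  obtain \<mu> \<sigma> \<eta> where lam: "lam = dot_act n \<sigma> (\<lambda>i. \<mu> i - (of_nat p / of_nat q) * \<eta> i)"
    and \<mu>: "\<mu> \<in> PrZ n p" and \<sigma>: "\<sigma> permutes {0..n}" and \<eta>: "\<eta> \<in> coweight_lattice n"
    and C: "cond_C n q \<sigma> \<eta>"
    using assms(7) by (auto simp: admissible_def weyl_group_def)
  obtain \<tau> where mu: "mu = dot_act n \<tau> lam" and \<tau>: "\<tau> permutes {0..n}"
    using assms(8) by (auto simp: dot_orbit_def weyl_group_def)
  have \<tau>\<sigma>: "\<tau> \<circ> \<sigma> permutes {0..n}" by (rule permutes_compose[OF \<sigma> \<tau>])
  have mu_eq: "mu = dot_act n (\<tau> \<circ> \<sigma>) (\<lambda>i. \<mu> i - (of_nat p / of_nat q) * \<eta> i)"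
    unfolding mu lam by (rule dot_act_compose[OF permutes_bij[OF \<tau>] permutes_bij[OF \<sigma>]])
  have "cond_C n q (\<tau> \<circ> \<sigma>) \<eta>"
    using cond_C_iff_dominant[OF assms(4,3) \<mu> cond_C_imp_gaps_bounded[OF C] \<tau>\<sigma>] dom mu_eq
    by simp
  then show "mu \<in> admissible n p q"
    unfolding admissible_def weyl_group_def using mu_eq \<mu> \<tau>\<sigma> \<eta> by blast
qed

end
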